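(* Let $b\ge1$ and let $q=(q_1,q_2,\ldots,q_k)$ be an ordered partition of $b$ (so $k\ge 1$). The number of ways $q$ can be embedded into an ordered partition of $b$ (counting all nontrivial embeddings of $q$ into all ordered partitions $r$ of $b$, plus the one trivial embedding of $q$ into itself) is \[ 1+\frac{q_1+2k-2}{q_1+k-1}\binom{q_1+k-1}{k-1}2^{q_1-1}. \] Equivalently, this is the number of cards for $b$ balls whose left partition is $q$.
   Context: For an integer $b\ge 0$, an ordered partition of $b$ is a finite sequence $(q_1,\ldots,q_k)$ of positive integers summing to $b$ (for $b=0$ the only one is the empty sequence). An ordered partition $(q_1,\ldots,q_k)$ with $k\ge1$ is nontrivially embedded into an ordered partition $(r_1,\ldots,r_\ell)$ by a choice of indices $1\le i_2<i_3<\cdots<i_k\le \ell$ with $q_j\le r_{i_j}$ for $2\le j\le k$; different index tuples count as different embeddings. The trivial embedding of $q$ into $r$ exists only when $q=r$. A card for $b$ balls is either (i) a trivial card, given by an ordered partition $q$ of $b$, whose left and right partitions are both $q$; or (ii) a throw card, given by ordered partitions $q=(q_1,\ldots,q_k)$ ($k\ge1$) and $r=(r_1,\ldots,r_\ell)$ of $b$ together with a nontrivial embedding $(i_2,\ldots,i_k)$ of $q$ into $r$; its left partition is $q$ and its right partition is $r$. Different index tuples give different cards, and a throw card is distinct from the trivial card even when $q=r$. *)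

theory Defs
  imports Complex_Main
begin

definition ordered_partition :: "nat \<Rightarrow> nat list \<Rightarrow> bool" where
  "ordered_partition b q \<longleftrightarrow> (\<forall>x\<in>set q. 0 < x) \<and> sum_list q = b"

text \<open>A nontrivial embedding of q = (q_1,...,q_k), k \<ge> 1, into r = (r_1,...,r_l):
  indices i_2 < ... < i_k in {1..l} with q_j \<le> r_(i_j).  Represented 0-based:
  the list ix has length k-1, ix!(j-2) is i_j - 1, strictly increasing, all < length r,
  and q!(j+1) \<le> r!(ix!j) for j < k-1.\<close>
definition nontriv_embedding :: "nat list \<Rightarrow> nat list \<Rightarrow> nat list \<Rightarrow> bool" where
  "nontriv_embedding q r ix \<longleftrightarrow>
     q \<noteq> [] \<and> length ix = length q - 1 \<and> sorted_wrt (<) ix \<and>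
     (\<forall>i\<in>set ix. i < length r) \<and>
     (\<forall>j<length ix. q ! (j + 1) \<le> r ! (ix ! j))"

definition throw_cards_from :: "nat \<Rightarrow> nat list \<Rightarrow> (nat list \<times> nat list) set" where
  "throw_cards_from b q = {(r, ix). ordered_partition b r \<and> nontriv_embedding q r ix}"

definition num_embeddings :: "nat \<Rightarrow> nat list \<Rightarrow> nat" where
  "num_embeddings b q = 1 + card (throw_cards_from b q)"

end

theory Submission
  imports Defs
begin

text \<open>Only q_2, ..., q_k are matched, so with p = (q_2, ..., q_k) a throw card with left
  partition q is a partition r of b together with an embedding of p into r.  Sorting these by
  the first part r_1 shows that their number E(b, p) satisfies
  E(b + 1, p) = 2 E(b, p) + E(b + 1 - p_1, (p_2, ...)) for b > 0: a first part r_1 = 1 that is not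
  matched can be deleted, a first part that is not matched exactly can be lowered by one, and an
  exactly matched one can be deleted together with p_1.  Hence E(b, p) only depends on the slack
  n = b - (sum of p) and on m = length p, and the resulting two-variable recurrence is solved by
  2^(n-1) (C(n+m, m) + C(n+m-1, n)), which the absorption identity for binomials turns into
  the closed form.\<close>

lemma ordered_partition_Nil: "ordered_partition b [] \<longleftrightarrow> b = 0"
  unfolding ordered_partition_def by auto

lemma ordered_partition_0: "ordered_partition 0 r \<longleftrightarrow> r = []"
  unfolding ordered_partition_def by (cases r) auto

lemma ordered_partition_Cons:
  "ordered_partition b (x # r) \<longleftrightarrow> 0 < x \<and> x \<le> b \<and> ordered_partition (b - x) r"
  unfolding ordered_partition_def by auto

definition embeds :: "nat list \<Rightarrow> nat list \<Rightarrow> nat list \<Rightarrow> bool" where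
  "embeds p r ix \<longleftrightarrow> length ix = length p \<and> sorted_wrt (<) ix \<and> (\<forall>i\<in>set ix. i < length r)
     \<and> (\<forall>j<length ix. p ! j \<le> r ! (ix ! j))"

lemma embeds_Nil_right: "embeds p [] ix \<longleftrightarrow> p = [] \<and> ix = []"
  unfolding embeds_def by (cases ix) auto

lemma embeds_Cons_skip: "embeds p (x # r) (map Suc ix) \<longleftrightarrow> embeds p r ix"
  unfolding embeds_def by (auto simp: sorted_wrt_map)

lemma embeds_Cons_use:
  "embeds (p0 # p) (x # r) (0 # map Suc ix) \<longleftrightarrow> p0 \<le> x \<and> embeds p r ix"
  unfolding embeds_def by (auto simp: sorted_wrt_map less_Suc_eq_0_disj)

lemma embeds_Cons_right:
  "embeds p (x # r) ix \<longleftrightarrow>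
     (\<exists>ix'. ix = map Suc ix' \<and> embeds p r ix') \<or>
     (\<exists>p0 p' ix'. p = p0 # p' \<and> ix = 0 # map Suc ix' \<and> p0 \<le> x \<and> embeds p' r ix')"
    (is "?lhs \<longleftrightarrow> ?rhs")
proof
  assume emb: ?lhs
  have shift: "xs = map Suc (map (\<lambda>i. i - 1) xs)" if "0 \<notin> set xs" for xs :: "nat list"
    using that by (induction xs) auto
  have "sorted_wrt (<) ix" using emb unfolding embeds_def by simp
  then have "0 \<notin> set (tl ix)" by (cases ix) auto
  then have "ix = 0 # map Suc (map (\<lambda>i. i - 1) (tl ix))" if "0 \<in> set ix"
    using that shift by (cases ix) auto
  moreover have "\<exists>p0 p'. p = p0 # p'" if "ix \<noteq> []"
    using emb that unfolding embeds_def by (cases p) auto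
  ultimately show ?rhs
    using emb shift[of ix] embeds_Cons_skip embeds_Cons_use by (metis list.discI set_ConsD)
next
  assume ?rhs
  then show ?lhs using embeds_Cons_skip embeds_Cons_use by auto
qed

lemma sum_list_le_of_embeds: "embeds p r ix \<Longrightarrow> sum_list p \<le> sum_list r"
proof (induction r arbitrary: p ix)
  case Nil
  then show ?case by (simp add: embeds_Nil_right)
next
  case (Cons x r)
  then show ?case by (fastforce simp: embeds_Cons_right)
qed

definition partition_embeddings :: "nat \<Rightarrow> nat list \<Rightarrow> (nat list \<times> nat list) set" where
  "partition_embeddings b p = {(r, ix). ordered_partition b r \<and> embeds p r ix}"

lemma throw_cards_from_eq_partition_embeddings:
  "throw_cards_from b (q0 # p) = partition_embeddings b p"
  unfolding throw_cards_from_def partition_embeddings_def nontriv_embedding_def embeds_def by simp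

lemma partition_embeddings_0: "partition_embeddings 0 [] = {([], [])}"
  unfolding partition_embeddings_def ordered_partition_0
  by (auto simp: embeds_Nil_right)

lemma partition_embeddings_eq_empty:
  "b < sum_list p \<Longrightarrow> partition_embeddings b p = {}"
  unfolding partition_embeddings_def ordered_partition_def
  by (auto dest: sum_list_le_of_embeds)

lemma finite_partition_embeddings: "finite (partition_embeddings b p)"
proof (rule finite_subset)
  show "partition_embeddings b p \<subseteq>
      {r. set r \<subseteq> {..b} \<and> length r \<le> b} \<times> {ix. set ix \<subseteq> {..b} \<and> length ix \<le> length p}"
  proof safe
    fix r ix assume "(r, ix) \<in> partition_embeddings b p"
    then have part: "ordered_partition b r" and emb: "embeds p r ix"
      unfolding partition_embeddings_def by auto
    have "length r \<le> sum_list r" if "\<forall>x\<in>set r. 0 < x" for r :: "nat list"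
      using that by (induction r) auto
    then have "length r \<le> sum_list r" using part unfolding ordered_partition_def by blast
    with part show "length r \<le> b" by (simp add: ordered_partition_def)
    show "x \<le> b" if "x \<in> set r" for x
      using part that unfolding ordered_partition_def by (metis member_le_sum_list zero_le)
    show "length ix \<le> length p"
      using emb unfolding embeds_def by simp
    show "i \<le> b" if "i \<in> set ix" for i
      using emb \<open>length r \<le> b\<close> that unfolding embeds_def by auto
  qed
  show "finite ({r. set r \<subseteq> {..b} \<and> length r \<le> b} \<times> {ix. set ix \<subseteq> {..b} \<and> length ix \<le> length p})"
    by (intro finite_cartesian_product finite_lists_length_le) auto
qed

definition skip_first :: "nat list \<times> nat list \<Rightarrow> nat list \<times> nat list" where
  "skip_first = (\<lambda>(r, ix). (1 # r, map Suc ix))"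

definition grow_first :: "nat list \<times> nat list \<Rightarrow> nat list \<times> nat list" where
  "grow_first = (\<lambda>(r, ix). (Suc (hd r) # tl r, ix))"

definition use_first :: "nat \<Rightarrow> nat list \<times> nat list \<Rightarrow> nat list \<times> nat list" where
  "use_first x = (\<lambda>(r, ix). (x # r, 0 # map Suc ix))"

definition used_first :: "nat \<Rightarrow> nat list \<Rightarrow> (nat list \<times> nat list) set" where
  "used_first b p = (case p of [] \<Rightarrow> {}
     | p0 # p' \<Rightarrow> if p0 \<le> b then use_first p0 ` partition_embeddings (b - p0) p' else {})"

lemma image_skip_first_subset:
  "skip_first ` partition_embeddings b p \<subseteq> partition_embeddings (Suc b) p"
  by (auto simp: skip_first_def partition_embeddings_def ordered_partition_Cons embeds_Cons_skip)

lemma image_grow_first_subset: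
  "grow_first ` {z \<in> partition_embeddings b p. fst z \<noteq> []} \<subseteq> partition_embeddings (Suc b) p"
  by (auto simp: grow_first_def partition_embeddings_def neq_Nil_conv ordered_partition_Cons
      embeds_Cons_right)

lemma used_first_subset:
  assumes "\<forall>x\<in>set p. 0 < x"
  shows "used_first b p \<subseteq> partition_embeddings b p"
  using assms
  by (auto simp: used_first_def use_first_def partition_embeddings_def ordered_partition_Cons
      embeds_Cons_use split: list.splits)

lemma Cons_mem_image_grow_first:
  assumes "1 < x" and "((x - 1) # r, ix) \<in> partition_embeddings b p"
  shows "(x # r, ix) \<in> grow_first ` {z \<in> partition_embeddings b p. fst z \<noteq> []}"
proof -
  have "(x # r, ix) = grow_first ((x - 1) # r, ix)"
    using assms(1) by (simp add: grow_first_def)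
  with assms(2) show ?thesis by force
qed

text \<open>The empty partition of 0 is filtered out because grow_first is junk on it.\<close>

lemma partition_embeddings_Suc_subset:
  assumes pos: "\<forall>x\<in>set p. 0 < x"
  shows "partition_embeddings (Suc b) p \<subseteq>
    skip_first ` partition_embeddings b p \<union>
    grow_first ` {z \<in> partition_embeddings b p. fst z \<noteq> []} \<union>
    used_first (Suc b) p"
    (is "_ \<subseteq> ?A \<union> ?B \<union> ?C")
proof
  fix z assume mem: "z \<in> partition_embeddings (Suc b) p"
  then obtain r0 ix where "z = (r0, ix)" and "ordered_partition (Suc b) r0"
    by (auto simp: partition_embeddings_def)
  then obtain x r where z: "z = (x # r, ix)"
    by (cases r0) (simp_all add: ordered_partition_Nil)
  then have "0 < x" "x \<le> Suc b" and part: "ordered_partition (Suc b - x) r"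
    and emb: "embeds p (x # r) ix"
    using mem by (simp_all add: partition_embeddings_def ordered_partition_Cons)
  have lowered: "((x - 1) # r, ix) \<in> partition_embeddings b p"
    if "1 < x" "embeds p ((x - 1) # r) ix"
    using that part \<open>x \<le> Suc b\<close> by (simp add: partition_embeddings_def ordered_partition_Cons)
  from emb consider
      (skip) ix' where "ix = map Suc ix'" "embeds p r ix'"
    | (use) p0 p' ix' where "p = p0 # p'" "ix = 0 # map Suc ix'" "p0 \<le> x" "embeds p' r ix'"
    by (auto simp: embeds_Cons_right)
  then show "z \<in> ?A \<union> ?B \<union> ?C"
  proof cases
    case skip
    show ?thesis
    proof (cases "x = 1")
      case True
      then have "(r, ix') \<in> partition_embeddings b p" "z = skip_first (r, ix')"
        using z part skip by (simp_all add: partition_embeddings_def skip_first_def)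
      then show ?thesis by blast
    next
      case False
      then have "z \<in> ?B"
        using z \<open>0 < x\<close> skip lowered Cons_mem_image_grow_first by (simp add: embeds_Cons_skip)
      then show ?thesis by blast
    qed
  next
    case use
    show ?thesis
    proof (cases "x = p0")
      case True
      then have "(r, ix') \<in> partition_embeddings (Suc b - p0) p'" "z = use_first p0 (r, ix')"
        using z part use by (simp_all add: partition_embeddings_def use_first_def)
      then have "z \<in> ?C"
        using use True \<open>x \<le> Suc b\<close> by (simp add: used_first_def)
      then show ?thesis by blast
    next
      case False
      have "0 < p0" using pos use by simp
      then have "z \<in> ?B"
        using z False use lowered Cons_mem_image_grow_first by (simp add: embeds_Cons_use)
      then show ?thesis by blast
    qed
  qed
qed

lemma partition_embeddings_Suc:
  assumes "\<forall>x\<in>set p. 0 < x"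
  shows "partition_embeddings (Suc b) p =
    skip_first ` partition_embeddings b p \<union>
    grow_first ` {z \<in> partition_embeddings b p. fst z \<noteq> []} \<union>
    used_first (Suc b) p"
  using partition_embeddings_Suc_subset[OF assms]
  by (intro equalityI Un_least image_skip_first_subset image_grow_first_subset used_first_subset assms)

lemma card_used_first:
  "card (used_first b p) =
     (case p of [] \<Rightarrow> 0 | p0 # p' \<Rightarrow> if p0 \<le> b then card (partition_embeddings (b - p0) p') else 0)"
proof -
  have "card (use_first x ` X) = card X" for x X
    by (rule card_image) (auto intro: inj_onI simp: use_first_def)
  then show ?thesis
    by (simp add: used_first_def split: list.split)
qed

lemma card_partition_embeddings_Suc:
  assumes pos: "\<forall>x\<in>set p. 0 < x"
  shows "card (partition_embeddings (Suc b) p) =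
    (if b = 0 then 1 else 2) * card (partition_embeddings b p) + card (used_first (Suc b) p)"
proof -
  let ?E = "partition_embeddings b p"
  let ?A = "skip_first ` ?E" and ?B = "grow_first ` {z \<in> ?E. fst z \<noteq> []}"
  let ?C = "used_first (Suc b) p"
  have nonempty_iff: "{z \<in> ?E. fst z \<noteq> []} = (if b = 0 then {} else ?E)"
    by (auto simp: partition_embeddings_def ordered_partition_Nil ordered_partition_0)
  have "inj skip_first"
    by (auto intro!: injI simp: skip_first_def)
  then have card_A: "card ?A = card ?E"
    by (simp add: card_image inj_on_subset)
  have "inj_on grow_first {z. fst z \<noteq> []}"
    by (auto intro!: inj_onI simp: grow_first_def neq_Nil_conv)
  then have "card ?B = card {z \<in> ?E. fst z \<noteq> []}"
    by (rule card_image[OF inj_on_subset]) auto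
  then have card_B: "card ?B = (if b = 0 then 0 else card ?E)"
    by (simp add: nonempty_iff)
  have head_pos: "0 < hd r" if "(r, ix) \<in> ?E" "r \<noteq> []" for r ix
    using that by (auto simp: partition_embeddings_def ordered_partition_def neq_Nil_conv)
  have "?A \<inter> ?B = {}"
    using head_pos by (fastforce simp: skip_first_def grow_first_def)
  moreover have "?A \<inter> ?C = {}"
    by (auto simp: skip_first_def used_first_def use_first_def split: list.splits if_splits)
  moreover have "?B \<inter> ?C = {}"
    by (auto simp: grow_first_def used_first_def use_first_def partition_embeddings_def
        neq_Nil_conv embeds_Cons_use split: list.splits if_splits)
  moreover have "finite ?A" "finite ?B" "finite ?C"
    using finite_partition_embeddings
    by (auto simp: used_first_def split: list.split)
  ultimately have "card (?A \<union> ?B \<union> ?C) = card ?A + card ?B + card ?C"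
    by (simp add: card_Un_disjoint Int_Un_distrib2)
  then show ?thesis
    using partition_embeddings_Suc[OF pos, of b] card_A card_B by simp
qed

fun embedding_count :: "nat \<Rightarrow> nat \<Rightarrow> nat" where
  "embedding_count 0 m = 1"
| "embedding_count (Suc 0) 0 = 1"
| "embedding_count (Suc (Suc n)) 0 = 2 * embedding_count (Suc n) 0"
| "embedding_count (Suc n) (Suc m) = 2 * embedding_count n (Suc m) + embedding_count (Suc n) m"

lemma card_partition_embeddings:
  assumes "\<forall>x\<in>set p. 0 < x"
  shows "card (partition_embeddings (sum_list p + n) p) = embedding_count n (length p)"
  using assms
proof (induction "sum_list p + n" arbitrary: p n rule: less_induct)
  case less
  show ?case
  proof (cases p)
    case Nil
    show ?thesis
    proof (cases n)
      case 0
      then show ?thesis using Nil by (simp add: partition_embeddings_0)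
    next
      case (Suc n')
      have "card (partition_embeddings n' []) = embedding_count n' 0"
        using less.hyps[of "[]" n'] Nil Suc by simp
      then show ?thesis
        using card_partition_embeddings_Suc[of "[]" n'] Nil Suc
        by (cases n') (simp_all add: used_first_def)
    qed
  next
    case (Cons p0 p')
    have "0 < p0" and pos': "\<forall>x\<in>set p'. 0 < x" using less.prems Cons by simp_all
    then obtain b where b: "sum_list p + n = Suc b"
      using Cons by (cases "sum_list p + n") simp_all
    have "Suc b - p0 = sum_list p' + n" "p0 \<le> Suc b" using b Cons by simp_all
    then have used: "card (used_first (Suc b) p) = embedding_count n (length p')"
      using less.hyps[of p' n] \<open>0 < p0\<close> pos' Cons by (simp add: card_used_first)
    show ?thesis
    proof (cases n)
      case 0
      then have "partition_embeddings b p = {}"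
        using b by (intro partition_embeddings_eq_empty) simp
      then show ?thesis
        using card_partition_embeddings_Suc[OF less.prems, of b] b used 0 Cons by simp
    next
      case (Suc n')
      have "card (partition_embeddings b p) = embedding_count n' (length p)"
        using less.hyps[of p n'] less.prems b Suc by simp
      then show ?thesis
        using card_partition_embeddings_Suc[OF less.prems, of b] b used Suc Cons \<open>0 < p0\<close>
        by simp
    qed
  qed
qed

lemma embedding_count_Suc:
  "embedding_count (Suc n) m = 2 ^ n * ((Suc (n + m) choose m) + ((n + m) choose Suc n))"
proof (induction n arbitrary: m)
  case 0
  show ?case by (induction m) simp_all
next
  case (Suc n)
  note IH_n = Suc.IH
  show ?case
  proof (induction m)
    case 0
    show ?case using IH_n[of 0] by simp
  next
    case (Suc m)
    then show ?case using IH_n[of "Suc m"] by (simp add: algebra_simps)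
  qed
qed

lemma times_binomial_diagonal:
  "Suc (n + m) * ((n + m) choose Suc n) = m * (Suc (n + m) choose m)"
proof -
  have "(Suc (n + m) choose Suc n) = (Suc (n + m) choose m)"
    using binomial_symmetric[of "Suc n" "Suc (n + m)"] by simp
  then show ?thesis
    using binomial_absorb_comp[of "Suc (n + m)" "Suc n"] by simp
qed

lemma embedding_count_Suc_real:
  "real (embedding_count (Suc n) m) =
     real (Suc n + 2 * m) / real (Suc n + m) * real (Suc n + m choose m) * 2 ^ n"
proof -
  have "real ((n + m) choose Suc n) = real m * real (Suc (n + m) choose m) / real (Suc (n + m))"
    using times_binomial_diagonal[of n m] by (simp add: field_simps flip: of_nat_mult)
  then show ?thesis
    by (simp add: embedding_count_Suc field_simps)
qed

theorem lemma3:
  fixes b :: nat and q :: "nat list"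
  assumes "b \<ge> 1" and "ordered_partition b q"
  defines "k \<equiv> length q" and "q1 \<equiv> hd q"
  shows "finite (throw_cards_from b q) \<and>
         real (num_embeddings b q) =
           1 + real (q1 + 2 * k - 2) / real (q1 + k - 1)
               * real ((q1 + k - 1) choose (k - 1)) * 2 ^ (q1 - 1)"
proof -
  obtain q0 p where q: "q = q0 # p"
    using assms(1,2) by (cases q) (auto simp: ordered_partition_Nil)
  obtain n where q0: "q0 = Suc n"
    using assms(2) q by (cases q0) (auto simp: ordered_partition_def)
  have pos: "\<forall>x\<in>set p. 0 < x" and b: "b = sum_list p + Suc n"
    using assms(2) q q0 by (auto simp: ordered_partition_def)
  have cards: "throw_cards_from b q = partition_embeddings (sum_list p + Suc n) p"
    unfolding q b by (rule throw_cards_from_eq_partition_embeddings)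
  have "card (throw_cards_from b q) = embedding_count (Suc n) (length p)"
    unfolding cards by (rule card_partition_embeddings[OF pos])
  moreover have "q1 = Suc n" "k = Suc (length p)"
    unfolding q1_def k_def q q0 by simp_all
  ultimately show ?thesis
    using finite_partition_embeddings cards
    by (simp add: num_embeddings_def embedding_count_Suc_real)
qed

end
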